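(* Let $\lambda>1$ and $g_\lambda(x)=\frac{x^{\lambda}\Gamma(x)}{\Gamma(\lambda+x)}$, $x>0$. Then $g_\lambda\in\mathcal T_{\lambda-1,-3}$.
   Context: $\gamma(\beta,x)=\int_0^x e^{-t}t^{\beta-1}\,dt$ is the incomplete gamma function. A function $\varphi$ on $(0,\infty)$ is completely monotonic of order $\alpha$ if $x^{\alpha}\varphi(x)$ is completely monotonic. For $\beta>0$ and $\alpha<\beta+1$, $\mathcal T_{\beta,\alpha}$ is the class of functions of the form $f(x)=ax^{\beta}+b+\int_0^\infty\gamma(\beta,xt)\varphi(t)\,dt$, $x>0$, with $a,b\ge 0$ and $\varphi$ completely monotonic of order $\alpha$. *)

theory Defs
  imports "HOL-Analysis.Analysis"
begin

definition completely_monotonic :: "(real \<Rightarrow> real) \<Rightarrow> bool" where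
  "completely_monotonic f \<longleftrightarrow>
     (\<forall>n. \<forall>x>0. ((deriv ^^ n) f has_real_derivative (deriv ^^ Suc n) f x) (at x)
                 \<and> (-1) ^ n * (deriv ^^ n) f x \<ge> 0)"

definition completely_monotonic_order :: "real \<Rightarrow> (real \<Rightarrow> real) \<Rightarrow> bool" where
  "completely_monotonic_order \<alpha> \<phi> \<longleftrightarrow> completely_monotonic (\<lambda>x. x powr \<alpha> * \<phi> x)"

definition lower_inc_gamma :: "real \<Rightarrow> real \<Rightarrow> real" where
  "lower_inc_gamma \<beta> x = integral {0..x} (\<lambda>t. exp (- t) * t powr (\<beta> - 1))"

definition T_class :: "real \<Rightarrow> real \<Rightarrow> (real \<Rightarrow> real) set" where
  "T_class \<beta> \<alpha> = {f. \<exists>a b \<phi>. a \<ge> 0 \<and> b \<ge> 0 \<and> completely_monotonic_order \<alpha> \<phi> \<and>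
      (\<forall>x>0. ((\<lambda>t. lower_inc_gamma \<beta> (x * t) * \<phi> t) has_integral
                 (f x - a * x powr \<beta> - b)) {0<..})}"

end

theory Submission
  imports Defs "HOL-Real_Asymp.Real_Asymp"
begin

text \<open>Take \<open>a = b = 0\<close> and \<open>\<phi> = -\<Phi>'\<close>, where
  \<open>\<Phi>(t) = C e^(-t) (1 - e^(-t))^p t^(-p)\<close> with \<open>p = \<lambda> - 2\<close> and \<open>C = 1/\<Gamma>(\<lambda> - 1)\<close>.
  For \<open>m = \<lceil>p\<rceil>\<close> one computes
  \<open>t^(-3) \<phi>(t) = C e^(-t) (1 - e^(-t))^(p - m - 1) t^(m - \<lambda>) K(t)^m L(t)\<close>,
  where \<open>K\<close> and \<open>L\<close> are the Laplace transforms of \<open>1\<close> and \<open>1 + p u\<close> on \<open>[0,1]\<close>.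
  Every factor is completely monotonic (the second one as a completely monotonic function of
  the Bernstein function \<open>1 - e^(-t)\<close>), hence so is the product.

  For \<open>x > 0\<close> the function
  \<open>F(t) = C x^(\<lambda> - 1) B(1 - e^(-t); \<lambda> - 1, x + 1) - \<gamma>(\<lambda> - 1, x t) \<Phi>(t)\<close>,
  with \<open>B(v; a, b)\<close> the incomplete beta function, is a primitive of the nonnegative integrand
  \<open>\<gamma>(\<lambda> - 1, x t) \<phi>(t)\<close>: the derivative of \<open>\<gamma>(\<lambda> - 1, x t)\<close> times \<open>\<Phi>(t)\<close> cancels the
  derivative of the beta term. As \<open>F(0+) = 0\<close>, the integral is
  \<open>F(\<infinity>) = C x^(\<lambda> - 1) B(\<lambda> - 1, x + 1) = x^\<lambda> \<Gamma>(x) / \<Gamma>(\<lambda> + x)\<close>.\<close>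

text \<open>A coinductive form of complete monotonicity on \<open>(0,\<infinity>)\<close>: it avoids iterated \<^const>\<open>deriv\<close>
  and turns closure properties into coinductions.\<close>
coinductive cmono :: "(real \<Rightarrow> real) \<Rightarrow> bool" where
  cmonoI: "(\<forall>x>0. f x \<ge> 0) \<Longrightarrow> (\<forall>x>0. (f has_real_derivative f' x) (at x)) \<Longrightarrow>
    cmono (\<lambda>x. - f' x) \<Longrightarrow> cmono f"

lemma cmono_by_invariant:
  assumes "P f"
    and "\<And>g. P g \<Longrightarrow> (\<forall>x>0. g x \<ge> 0) \<and>
           (\<exists>g'. (\<forall>x>0. (g has_real_derivative g' x) (at x)) \<and> P (\<lambda>x. - g' x))"
  shows "cmono f"
  using assms(1) by (coinduction arbitrary: f rule: cmono.coinduct) (use assms(2) in blast)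

lemma cmono_nonneg: "cmono f \<Longrightarrow> x > 0 \<Longrightarrow> f x \<ge> 0"
  by (auto elim: cmono.cases)

lemma cmono_derivative:
  "cmono f \<Longrightarrow> \<exists>f'. (\<forall>x>0. (f has_real_derivative f' x) (at x)) \<and> cmono (\<lambda>x. - f' x)"
  by (erule cmono.cases) blast

lemma cmono_cong:
  assumes "cmono f" and "\<And>x. x > 0 \<Longrightarrow> f x = g x"
  shows "cmono g"
proof (rule cmono_by_invariant[where P="\<lambda>g. \<exists>f. cmono f \<and> (\<forall>x>0. f x = g x)"])
  show "\<exists>f. cmono f \<and> (\<forall>x>0. f x = g x)" using assms by blast
next
  fix h assume "\<exists>f. cmono f \<and> (\<forall>x>0. f x = h x)"
  then obtain f where f: "cmono f" "\<forall>x>0. f x = h x" by blast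
  obtain f' where f': "\<forall>x>0. (f has_real_derivative f' x) (at x)" "cmono (\<lambda>x. - f' x)"
    using cmono_derivative[OF f(1)] by blast
  have "(h has_real_derivative f' x) (at x)" if "x > 0" for x
    by (rule has_field_derivative_transform_within_open[OF f'(1)[rule_format, OF that], of "{0<..}"])
       (use that f(2) in auto)
  then show "(\<forall>x>0. h x \<ge> 0) \<and>
      (\<exists>h'. (\<forall>x>0. (h has_real_derivative h' x) (at x)) \<and> (\<exists>f. cmono f \<and> (\<forall>x>0. f x = - h' x)))"
    using f f'(2) cmono_nonneg by metis
qed

lemma cmono_const: "c \<ge> 0 \<Longrightarrow> cmono (\<lambda>x. c)"
  by (rule cmono_by_invariant[where P="\<lambda>g. \<exists>c\<ge>0. g = (\<lambda>x. c)"])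
     (auto intro!: exI[of _ "\<lambda>x. 0"] derivative_eq_intros)

text \<open>Coinduction up to this class gives closure under products (\<open>g = id\<close>) and under
  composition with Bernstein functions \<open>g\<close>.\<close>
inductive cmono_comp_sums :: "(real \<Rightarrow> real) \<Rightarrow> (real \<Rightarrow> real) \<Rightarrow> bool" for g where
  comp_sums_base: "cmono f \<Longrightarrow> cmono k \<Longrightarrow> cmono_comp_sums g (\<lambda>x. f (g x) * k x)"
| comp_sums_add: "cmono_comp_sums g h1 \<Longrightarrow> cmono_comp_sums g h2 \<Longrightarrow>
    cmono_comp_sums g (\<lambda>x. h1 x + h2 x)"

lemma cmono_comp_sums_step:
  assumes "cmono_comp_sums g h"
    and g_pos: "\<forall>x>0. g x > 0"
    and g_deriv: "\<forall>x>0. (g has_real_derivative g' x) (at x)"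
    and g'_mult: "\<And>k. cmono k \<Longrightarrow> cmono (\<lambda>x. g' x * k x)"
  shows "(\<forall>x>0. h x \<ge> 0) \<and>
    (\<exists>h'. (\<forall>x>0. (h has_real_derivative h' x) (at x)) \<and> cmono_comp_sums g (\<lambda>x. - h' x))"
  using assms(1)
proof induction
  case (comp_sums_base f k)
  obtain f' where f': "\<forall>x>0. (f has_real_derivative f' x) (at x)" "cmono (\<lambda>x. - f' x)"
    using cmono_derivative[OF comp_sums_base(1)] by blast
  obtain k' where k': "\<forall>x>0. (k has_real_derivative k' x) (at x)" "cmono (\<lambda>x. - k' x)"
    using cmono_derivative[OF comp_sums_base(2)] by blast
  define h' where "h' x = f' (g x) * g' x * k x + f (g x) * k' x" for x
  have "cmono_comp_sums g (\<lambda>x. (- f' (g x)) * (g' x * k x) + f (g x) * (- k' x))"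
    by (intro cmono_comp_sums.intros f'(2) k'(2) g'_mult comp_sums_base)
  then have "cmono_comp_sums g (\<lambda>x. - h' x)"
    by (simp add: h'_def algebra_simps)
  moreover have "((\<lambda>x. f (g x) * k x) has_real_derivative h' x) (at x)" if "x > 0" for x
  proof -
    have "((\<lambda>x. f (g x)) has_real_derivative f' (g x) * g' x) (at x)"
      by (rule DERIV_chain2[OF f'(1)[rule_format] g_deriv[rule_format]]) (use that g_pos in auto)
    from DERIV_mult[OF this k'(1)[rule_format, OF that]] show ?thesis
      by (simp add: h'_def algebra_simps)
  qed
  moreover have "\<forall>x>0. f (g x) * k x \<ge> 0"
    using comp_sums_base cmono_nonneg g_pos by simp
  ultimately show ?case by blast
next
  case (comp_sums_add h1 h2)
  then obtain h1' h2' where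
    h1': "\<forall>x>0. (h1 has_real_derivative h1' x) (at x)" "cmono_comp_sums g (\<lambda>x. - h1' x)" and
    h2': "\<forall>x>0. (h2 has_real_derivative h2' x) (at x)" "cmono_comp_sums g (\<lambda>x. - h2' x)"
    by blast
  have "cmono_comp_sums g (\<lambda>x. - (h1' x + h2' x))"
    using cmono_comp_sums.comp_sums_add[OF h1'(2) h2'(2)] by simp
  moreover have "\<forall>x>0. ((\<lambda>x. h1 x + h2 x) has_real_derivative h1' x + h2' x) (at x)"
    using h1'(1) h2'(1) by (auto intro!: derivative_eq_intros)
  ultimately show ?case using comp_sums_add by (auto intro!: add_nonneg_nonneg)
qed

lemma cmono_comp_sums_cmono:
  assumes "cmono_comp_sums g h"
    and "\<forall>x>0. g x > 0"
    and "\<forall>x>0. (g has_real_derivative g' x) (at x)"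
    and "\<And>k. cmono k \<Longrightarrow> cmono (\<lambda>x. g' x * k x)"
  shows "cmono h"
  using assms(1) by (rule cmono_by_invariant[where P="cmono_comp_sums g"])
    (rule cmono_comp_sums_step[OF _ assms(2-4)])

lemma cmono_mult:
  assumes "cmono f" "cmono g"
  shows "cmono (\<lambda>x. f x * g x)"
proof (rule cmono_comp_sums_cmono[where g="\<lambda>x. x" and g'="\<lambda>_. 1"])
  show "cmono_comp_sums (\<lambda>x. x) (\<lambda>x. f x * g x)"
    using comp_sums_base[OF assms, of "\<lambda>x. x"] .
qed auto

lemma cmono_power: "cmono f \<Longrightarrow> cmono (\<lambda>x. f x ^ n)"
  by (induction n) (simp_all add: cmono_const cmono_mult)

lemma cmono_compose:
  assumes "cmono f"
    and "\<forall>x>0. g x > 0"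
    and "\<forall>x>0. (g has_real_derivative g' x) (at x)"
    and "cmono g'"
  shows "cmono (\<lambda>x. f (g x))"
proof (rule cmono_comp_sums_cmono[OF _ assms(2,3)])
  show "cmono_comp_sums g (\<lambda>x. f (g x))"
    using comp_sums_base[OF assms(1) cmono_const[of 1]] by simp
qed (rule cmono_mult[OF assms(4)])

lemma cmono_exp: "c \<ge> 0 \<Longrightarrow> cmono (\<lambda>x. exp (- c * x))"
proof (rule cmono_by_invariant[where P="\<lambda>g. \<exists>a\<ge>0. g = (\<lambda>x. a * exp (- c * x))"])
  fix g :: "real \<Rightarrow> real"
  assume "c \<ge> 0" "\<exists>a\<ge>0. g = (\<lambda>x. a * exp (- c * x))"
  then obtain a where a: "a \<ge> 0" "a * c \<ge> 0" "g = (\<lambda>x. a * exp (- c * x))" by auto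
  have "\<forall>x>0. (g has_real_derivative - (a * c) * exp (- c * x)) (at x)"
    using a by (auto intro!: derivative_eq_intros)
  with a show "(\<forall>x>0. g x \<ge> 0) \<and> (\<exists>g'. (\<forall>x>0. (g has_real_derivative g' x) (at x)) \<and>
      (\<exists>a\<ge>0. (\<lambda>x. - g' x) = (\<lambda>x. a * exp (- c * x))))"
    by (intro conjI exI[of _ "\<lambda>x. - (a * c) * exp (- c * x)"] exI[of _ "a * c"]) auto
qed (auto intro: exI[of _ 1])

lemma cmono_powr: "e \<ge> 0 \<Longrightarrow> cmono (\<lambda>x. x powr (- e))"
proof (rule cmono_by_invariant[where P="\<lambda>g. \<exists>a\<ge>0. \<exists>e\<ge>0. g = (\<lambda>x. a * x powr (- e))"])
  fix g :: "real \<Rightarrow> real"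
  assume "\<exists>a\<ge>0. \<exists>e\<ge>0. g = (\<lambda>x. a * x powr (- e))"
  then obtain a e where a: "a \<ge> 0" "e \<ge> 0" "g = (\<lambda>x. a * x powr (- e))" by blast
  have "\<forall>x>0. (g has_real_derivative - (a * e) * x powr (- (e + 1))) (at x)"
    using a by (auto intro!: derivative_eq_intros simp: powr_diff)
  with a show "(\<forall>x>0. g x \<ge> 0) \<and> (\<exists>g'. (\<forall>x>0. (g has_real_derivative g' x) (at x)) \<and>
      (\<exists>a\<ge>0. \<exists>e\<ge>0. (\<lambda>x. - g' x) = (\<lambda>x. a * x powr (- e))))"
    by (intro conjI exI[of _ "\<lambda>x. - (a * e) * x powr (- (e + 1))"] exI[of _ "a * e"]
        exI[of _ "e + 1"]) auto
qed (rule exI[of _ 1], auto intro!: exI[of _ e])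

lemma has_real_derivative_laplace_integral:
  assumes "continuous_on {a..b} \<rho>"
  shows "((\<lambda>t. integral {a..b} (\<lambda>u. \<rho> u * exp (- t * u))) has_real_derivative
           - integral {a..b} (\<lambda>u. u * \<rho> u * exp (- t * u))) (at t)"
proof -
  have "((\<lambda>t. integral (cbox a b) (\<lambda>u. \<rho> u * exp (- t * u))) has_field_derivative
          integral (cbox a b) (\<lambda>u. \<rho> u * (exp (- t * u) * (- u)))) (at t within UNIV)"
  proof (rule leibniz_rule_field_derivative)
    have "continuous_on (UNIV \<times> {a..b}) (\<lambda>z::real \<times> real. \<rho> (snd z))"
      by (rule continuous_on_compose2[OF assms]) (auto intro!: continuous_intros)
    then have "continuous_on (UNIV \<times> {a..b})
        (\<lambda>z::real \<times> real. \<rho> (snd z) * (exp (- fst z * snd z) * (- snd z)))"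
      by (intro continuous_intros)
    then show "continuous_on (UNIV \<times> cbox a b) (\<lambda>(t, u). \<rho> u * (exp (- t * u) * (- u)))"
      by (simp add: case_prod_beta')
  qed (auto intro!: derivative_eq_intros integrable_continuous_interval continuous_intros assms)
  then show ?thesis
    by (simp flip: integral_neg add: algebra_simps)
qed

lemma cmono_laplace_integral:
  assumes "a \<ge> 0" and "continuous_on {a..b} \<rho>" and "\<forall>u\<in>{a..b}. \<rho> u \<ge> 0"
  shows "cmono (\<lambda>t. integral {a..b} (\<lambda>u. \<rho> u * exp (- t * u)))"
proof -
  define M where "M j = (\<lambda>t. integral {a..b} (\<lambda>u. (\<rho> u * u ^ j) * exp (- t * u)))" for j
  have cont: "continuous_on {a..b} (\<lambda>u. \<rho> u * u ^ j)" for j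
    by (intro continuous_intros assms(2))
  have "cmono (M 0)"
  proof (rule cmono_by_invariant[where P="\<lambda>h. \<exists>j. h = M j"])
    fix h assume "\<exists>j. h = M j"
    then obtain j where j: "h = M j" by blast
    have "M j t \<ge> 0" for t
      unfolding M_def using assms
      by (intro integral_nonneg integrable_continuous_interval continuous_intros cont) auto
    moreover have "(M j has_real_derivative - M (Suc j) t) (at t)" for t
      using has_real_derivative_laplace_integral[OF cont[of j], of t]
      by (simp add: M_def algebra_simps)
    ultimately show "(\<forall>x>0. h x \<ge> 0) \<and>
        (\<exists>h'. (\<forall>x>0. (h has_real_derivative h' x) (at x)) \<and> (\<exists>j. (\<lambda>x. - h' x) = M j))"
      unfolding j by (intro conjI exI[of _ "\<lambda>t. - M (Suc j) t"]) auto
  qed auto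
  then show ?thesis by (simp add: M_def)
qed

lemma funpow_deriv_cmono_step:
  assumes "cmono F" and "\<forall>x>0. (deriv ^^ n) f x = (-1) ^ n * F x"
  obtains F' where "cmono (\<lambda>x. - F' x)"
    and "\<And>x. x > 0 \<Longrightarrow> ((deriv ^^ n) f has_real_derivative (-1) ^ n * F' x) (at x)"
    and "\<And>x. x > 0 \<Longrightarrow> (deriv ^^ Suc n) f x = (-1) ^ n * F' x"
proof -
  obtain F' where F': "\<forall>x>0. (F has_real_derivative F' x) (at x)" "cmono (\<lambda>x. - F' x)"
    using cmono_derivative[OF assms(1)] by blast
  have deriv: "((deriv ^^ n) f has_real_derivative (-1) ^ n * F' x) (at x)" if "x > 0" for x
  proof -
    have "((\<lambda>x. (-1) ^ n * F x) has_real_derivative (-1) ^ n * F' x) (at x)"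
      using F'(1) that by (auto intro!: derivative_eq_intros)
    then show ?thesis
      by (rule has_field_derivative_transform_within_open[of _ _ _ "{0<..}"])
         (use that assms(2) in auto)
  qed
  moreover have "(deriv ^^ Suc n) f x = (-1) ^ n * F' x" if "x > 0" for x
    using DERIV_imp_deriv[OF deriv[OF that]] by simp
  ultimately show ?thesis using F'(2) that by blast
qed

lemma cmono_funpow_deriv:
  assumes "cmono f"
  shows "\<exists>F. cmono F \<and> (\<forall>x>0. (deriv ^^ n) f x = (-1) ^ n * F x)"
proof (induction n)
  case 0
  then show ?case using assms by auto
next
  case (Suc n)
  then obtain F where "cmono F" "\<forall>x>0. (deriv ^^ n) f x = (-1) ^ n * F x" by blast
  then obtain F' where "cmono (\<lambda>x. - F' x)" "\<And>x. x > 0 \<Longrightarrow> (deriv ^^ Suc n) f x = (-1) ^ n * F' x"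
    using funpow_deriv_cmono_step by blast
  then show ?case by (intro exI[of _ "\<lambda>x. - F' x"]) auto
qed

lemma cmono_imp_completely_monotonic:
  assumes "cmono f"
  shows "completely_monotonic f"
  unfolding completely_monotonic_def
proof (intro allI impI conjI)
  fix n :: nat and x :: real
  assume x: "x > 0"
  obtain F where F: "cmono F" "\<forall>x>0. (deriv ^^ n) f x = (-1) ^ n * F x"
    using cmono_funpow_deriv[OF assms] by blast
  then obtain F' where
    "\<And>x. x > 0 \<Longrightarrow> ((deriv ^^ n) f has_real_derivative (-1) ^ n * F' x) (at x)"
    "\<And>x. x > 0 \<Longrightarrow> (deriv ^^ Suc n) f x = (-1) ^ n * F' x"
    using funpow_deriv_cmono_step by blast
  then show "((deriv ^^ n) f has_real_derivative (deriv ^^ Suc n) f x) (at x)"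
    using x by simp
  have "(-1) ^ n * (deriv ^^ n) f x = F x"
    using F(2) x by (simp flip: power_mult_distrib)
  then show "(-1) ^ n * (deriv ^^ n) f x \<ge> 0"
    using cmono_nonneg[OF F(1) x] by simp
qed

lemma has_real_derivative_integral_upper:
  fixes f :: "real \<Rightarrow> real"
  assumes "f integrable_on {a..b}" and "a < y" "y < b" and "isCont f y"
  shows "((\<lambda>z. integral {a..z} f) has_real_derivative f y) (at y)"
proof -
  have "((\<lambda>z. integral {a..z} f) has_vector_derivative f y) (at y within {a..b} - {})"
    by (rule integral_has_vector_derivative_continuous_at)
       (use assms in \<open>auto intro: continuous_at_imp_continuous_at_within\<close>)
  then show ?thesis
    using assms by (simp add: has_real_derivative_iff_has_vector_derivative at_within_Icc_at)
qed

lemma has_integral_greaterThan_FTC_nonneg: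
  fixes f F :: "real \<Rightarrow> real"
  assumes deriv: "\<And>t. t > a \<Longrightarrow> (F has_real_derivative f t) (at t)"
    and cont: "\<And>t. t > a \<Longrightarrow> isCont f t"
    and nonneg: "\<And>t. t > a \<Longrightarrow> f t \<ge> 0"
    and lim_a: "(F \<longlongrightarrow> A) (at_right a)"
    and lim_top: "(F \<longlongrightarrow> B) at_top"
  shows "(f has_integral (B - A)) {a<..}"
proof -
  have "ereal a < \<infinity>" by simp
  from interval_integral_FTC_nonneg[OF this, of F f A B] deriv cont nonneg lim_a lim_top
  have int: "set_integrable lborel (einterval a \<infinity>) f" and val: "(LBINT t=ereal a..\<infinity>. f t) = B - A"
    by (auto simp: ereal_tendsto_simps)
  have "einterval a \<infinity> = {a<..}" by (auto simp: einterval_def)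
  with set_borel_integral_eq_integral[OF int] val show ?thesis
    by (simp add: interval_lebesgue_integral_def has_integral_iff)
qed

lemma integral_affine_times_exp:
  fixes c t :: real
  assumes "t \<noteq> 0"
  shows "integral {0..1} (\<lambda>u. (1 + c * u) * exp (- t * u)) =
    (1 - exp (- t)) / t + c * (1 - exp (- t)) / t\<^sup>2 - c * exp (- t) / t"
proof -
  define F where "F u = - (1 + c * u) * exp (- t * u) / t - c * exp (- t * u) / t\<^sup>2" for u
  have "((\<lambda>u. (1 + c * u) * exp (- t * u)) has_integral (F 1 - F 0)) {0..1}"
  proof (rule fundamental_theorem_of_calculus)
    fix u :: real
    have "(F has_real_derivative (1 + c * u) * exp (- t * u)) (at u)"
      unfolding F_def using assms
      by (auto intro!: derivative_eq_intros simp: field_simps power2_eq_square)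
    then show "(F has_vector_derivative (1 + c * u) * exp (- t * u)) (at u within {0..1})"
      by (simp add: has_real_derivative_iff_has_vector_derivative has_vector_derivative_at_within)
  qed simp
  then show ?thesis
    unfolding F_def using assms by (simp add: integral_unique field_simps power2_eq_square)
qed

lemma has_integral_Gamma_integrand:
  "(b::real) > 0 \<Longrightarrow> ((\<lambda>t. exp (- t) * t powr (b - 1)) has_integral Gamma b) {0..}"
  using Gamma_integral_real[of b] by (simp add: exp_minus field_simps)

lemma lower_inc_gamma_integrable:
  fixes b y :: real
  assumes "b > 0"
  shows "(\<lambda>t. exp (- t) * t powr (b - 1)) integrable_on {0..y}"
  by (rule integrable_on_subinterval[of _ "{0..}"]) (use has_integral_Gamma_integrand[OF assms] in auto)

lemma lower_inc_gamma_0: "lower_inc_gamma b 0 = 0"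
  unfolding lower_inc_gamma_def by simp

lemma lower_inc_gamma_nonneg: "b > 0 \<Longrightarrow> lower_inc_gamma b y \<ge> 0"
  unfolding lower_inc_gamma_def by (rule integral_nonneg[OF lower_inc_gamma_integrable]) auto

lemma lower_inc_gamma_le_Gamma: "b > 0 \<Longrightarrow> lower_inc_gamma b y \<le> Gamma b"
  unfolding lower_inc_gamma_def
  using integral_subset_le[of "{0..y}" "{0..}" "\<lambda>t. exp (- t) * t powr (b - 1)"]
    lower_inc_gamma_integrable[of b y] has_integral_Gamma_integrand[of b]
  by (auto simp: integrable_on_def integral_unique)

lemma continuous_on_lower_inc_gamma: "b > 0 \<Longrightarrow> continuous_on {0..c} (lower_inc_gamma b)"
  unfolding lower_inc_gamma_def
  by (rule indefinite_integral_continuous_1[OF lower_inc_gamma_integrable])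

lemma lower_inc_gamma_has_real_derivative:
  assumes "b > 0" and "y > 0"
  shows "(lower_inc_gamma b has_real_derivative exp (- y) * y powr (b - 1)) (at y)"
  unfolding lower_inc_gamma_def[abs_def]
  by (rule has_real_derivative_integral_upper[OF lower_inc_gamma_integrable[of b "y + 1"]])
     (use assms in \<open>auto intro!: continuous_intros\<close>)

lemma has_real_derivative_lower_inc_gamma_scaled:
  assumes "b > 0" and "x > 0" and "t > 0"
  shows "((\<lambda>t. lower_inc_gamma b (x * t)) has_real_derivative
           exp (- (x * t)) * (x * t) powr (b - 1) * x) (at t)"
  using DERIV_chain2[OF lower_inc_gamma_has_real_derivative DERIV_cmult_Id, of b x t] assms by simp

definition lower_inc_beta :: "real \<Rightarrow> real \<Rightarrow> real \<Rightarrow> real" where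
  "lower_inc_beta a b v = integral {0..v} (\<lambda>s. s powr (a - 1) * (1 - s) powr (b - 1))"

lemma lower_inc_beta_0: "lower_inc_beta a b 0 = 0"
  unfolding lower_inc_beta_def by simp

lemma lower_inc_beta_1: "a > 0 \<Longrightarrow> b > 0 \<Longrightarrow> lower_inc_beta a b 1 = Beta a b"
  unfolding lower_inc_beta_def by (rule integral_unique[OF has_integral_Beta_real])

lemma continuous_on_lower_inc_beta:
  "a > 0 \<Longrightarrow> b > 0 \<Longrightarrow> continuous_on {0..1} (lower_inc_beta a b)"
  unfolding lower_inc_beta_def[abs_def]
  by (rule indefinite_integral_continuous_1[OF integrable_Beta'])

lemma lower_inc_beta_has_real_derivative:
  assumes "a > 0" "b > 0" and "0 < v" "v < 1"
  shows "(lower_inc_beta a b has_real_derivative v powr (a - 1) * (1 - v) powr (b - 1)) (at v)"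
  unfolding lower_inc_beta_def[abs_def]
  by (rule has_real_derivative_integral_upper[OF integrable_Beta'])
     (use assms in \<open>auto intro!: continuous_intros\<close>)

lemma Beta_plus1_div_Gamma:
  fixes a x :: real
  assumes "a > 0" and "x > 0"
  shows "x powr a / Gamma a * Beta a (x + 1) = x powr (a + 1) * Gamma x / Gamma (a + x + 1)"
proof -
  have "Gamma (x + 1) = x * Gamma x"
    using Gamma_plus1[of x] assms(2) nonpos_Ints_nonpos[of x] by fastforce
  then show ?thesis
    using assms by (simp add: Beta_def powr_add field_simps Gamma_real_pos[THEN less_imp_neq, symmetric])
qed

definition Phi :: "real \<Rightarrow> real \<Rightarrow> real" where
  "Phi lam t = 1 / Gamma (lam - 1) * exp (- t) * (1 - exp (- t)) powr (lam - 2) * t powr (2 - lam)"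

definition phi :: "real \<Rightarrow> real \<Rightarrow> real" where
  "phi lam t = Phi lam t * (1 + (lam - 2) / t - (lam - 2) * exp (- t) / (1 - exp (- t)))"

lemma powr_minus3_phi_factorization:
  fixes m :: nat and t lam :: real
  assumes t: "t > 0"
  defines "p \<equiv> lam - 2" and "D \<equiv> 1 - exp (- t)"
  shows "t powr (-3) * phi lam t =
    1 / Gamma (lam - 1) * exp (- t) * D powr (- (real m + 1 - p)) * t powr (- (lam - real m)) *
      (D / t) ^ m * (D / t + p * D / t\<^sup>2 - p * exp (- t) / t)"
proof -
  define Q where "Q = 1 + p / t - p * exp (- t) / D"
  have D: "D > 0" using t unfolding D_def by simp
  have "D powr (- (real m + 1 - p)) * D ^ (m + 1) = D powr (- (real m + 1 - p) + real (m + 1))"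
    by (simp only: powr_realpow[OF D, symmetric] powr_add)
  then have D_pow: "D powr (- (real m + 1 - p)) * D ^ (m + 1) = D powr p"
    by simp
  have "t powr (- (lam - real m)) / t ^ (m + 1) = t powr (-3 + (2 - lam))"
    by (simp only: powr_realpow[OF t, symmetric] powr_diff[symmetric]) (simp add: algebra_simps)
  then have t_pow: "t powr (- (lam - real m)) / t ^ (m + 1) = t powr (-3) * t powr (2 - lam)"
    by (simp only: powr_add)
  have "(D / t) ^ m * (D / t + p * D / t\<^sup>2 - p * exp (- t) / t) = D ^ (m + 1) / t ^ (m + 1) * Q"
    using t D by (simp add: Q_def power_divide field_simps power2_eq_square)
  then have "1 / Gamma (lam - 1) * exp (- t) * D powr (- (real m + 1 - p)) * t powr (- (lam - real m)) *
      (D / t) ^ m * (D / t + p * D / t\<^sup>2 - p * exp (- t) / t) =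
    1 / Gamma (lam - 1) * exp (- t) * D powr (- (real m + 1 - p)) * t powr (- (lam - real m)) *
      (D ^ (m + 1) / t ^ (m + 1) * Q)"
    by (simp only: mult.assoc)
  also have "\<dots> = 1 / Gamma (lam - 1) * exp (- t) * (D powr (- (real m + 1 - p)) * D ^ (m + 1)) *
      (t powr (- (lam - real m)) / t ^ (m + 1)) * Q"
    by (simp add: algebra_simps)
  also have "\<dots> = t powr (-3) * phi lam t"
    unfolding D_pow t_pow unfolding phi_def Phi_def Q_def p_def D_def by (simp only: ac_simps)
  finally show ?thesis ..
qed

lemma cmono_powr_minus3_phi:
  assumes "lam > 1"
  shows "cmono (\<lambda>t. t powr (-3) * phi lam t)"
proof -
  define p where "p = lam - 2"
  \<comment> \<open>this choice makes both exponents \<open>p - m - 1\<close> and \<open>m - \<lambda>\<close> nonpositive\<close>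
  define m where "m = nat \<lceil>p\<rceil>"
  have m: "p \<le> real m" "real m < lam" unfolding m_def p_def using assms by linarith+
  define K where "K = (\<lambda>t::real. integral {0..1} (\<lambda>u. exp (- t * u)))"
  define L where "L = (\<lambda>t::real. integral {0..1} (\<lambda>u. (1 + p * u) * exp (- t * u)))"
  have "1 + p * u \<ge> 0" if "u \<in> {0..1}" for u
  proof -
    have "u * (1 + p) \<ge> 0"
      by (rule mult_nonneg_nonneg) (use that assms in \<open>auto simp: p_def\<close>)
    then show ?thesis using that by (simp add: algebra_simps)
  qed
  then have L: "cmono L"
    unfolding L_def by (intro cmono_laplace_integral) (auto intro!: continuous_intros)
  have K: "cmono K"
    unfolding K_def using cmono_laplace_integral[of 0 1 "\<lambda>_. 1"] by simp
  have D: "cmono (\<lambda>t. (1 - exp (- t)) powr (- (real m + 1 - p)))"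
  proof (rule cmono_compose[where g="\<lambda>t. 1 - exp (- t)" and g'="\<lambda>t. exp (- 1 * t)"])
    show "cmono (\<lambda>y. y powr (- (real m + 1 - p)))"
      by (rule cmono_powr) (use m in simp)
    show "\<forall>t>0. ((\<lambda>t. 1 - exp (- t)) has_real_derivative exp (- 1 * t)) (at t)"
      by (auto intro!: derivative_eq_intros)
  qed (use cmono_exp[of 1] in auto)
  have "cmono (\<lambda>t. 1 / Gamma (lam - 1) * exp (- 1 * t) * (1 - exp (- t)) powr (- (real m + 1 - p)) *
      t powr (- (lam - real m)) * K t ^ m * L t)"
    by (intro cmono_mult cmono_const cmono_exp D cmono_powr cmono_power K L) (use m assms in auto)
  then show ?thesis
  proof (rule cmono_cong)
    fix t :: real
    assume "t > 0"
    then show "1 / Gamma (lam - 1) * exp (- 1 * t) * (1 - exp (- t)) powr (- (real m + 1 - p)) *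
        t powr (- (lam - real m)) * K t ^ m * L t = t powr (-3) * phi lam t"
      using powr_minus3_phi_factorization[of t lam m]
        integral_affine_times_exp[of t 0] integral_affine_times_exp[of t p]
      by (simp add: K_def L_def p_def)
  qed
qed

lemma Phi_has_real_derivative:
  assumes t: "t > 0"
  shows "(Phi lam has_real_derivative - phi lam t) (at t)"
proof -
  define C where "C = 1 / Gamma (lam - 1)"
  define D where "D = 1 - exp (- t)"
  have D: "D > 0" using t unfolding D_def by simp
  have dE: "((\<lambda>t. exp (- t)) has_real_derivative - exp (- t)) (at t)"
    by (auto intro!: derivative_eq_intros)
  have "((\<lambda>t. (1 - exp (- t)) powr (lam - 2)) has_real_derivative
      (lam - 2) * D powr (lam - 2 - 1) * exp (- t)) (at t)"
    unfolding D_def using D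
    by (intro DERIV_chain2[OF has_real_derivative_powr]) (auto simp: D_def intro!: derivative_eq_intros)
  then have dA: "((\<lambda>t. (1 - exp (- t)) powr (lam - 2)) has_real_derivative
      (lam - 2) * (D powr (lam - 2) / D) * exp (- t)) (at t)"
    using powr_diff[of D "lam - 2" 1] D by simp
  have dB: "((\<lambda>t. t powr (2 - lam)) has_real_derivative (2 - lam) * (t powr (2 - lam) / t)) (at t)"
    using has_real_derivative_powr[OF t, of "2 - lam"] powr_diff[of t "2 - lam" 1] t by simp
  have "(Phi lam has_real_derivative
      ((C * - exp (- t)) * (1 - exp (- t)) powr (lam - 2)
        + (lam - 2) * (D powr (lam - 2) / D) * exp (- t) * (C * exp (- t))) * t powr (2 - lam)
      + (2 - lam) * (t powr (2 - lam) / t) * (C * exp (- t) * (1 - exp (- t)) powr (lam - 2))) (at t)"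
    unfolding Phi_def[abs_def] C_def by (intro DERIV_mult DERIV_cmult dE dA dB)
  moreover have "((C * - exp (- t)) * (1 - exp (- t)) powr (lam - 2)
        + (lam - 2) * (D powr (lam - 2) / D) * exp (- t) * (C * exp (- t))) * t powr (2 - lam)
      + (2 - lam) * (t powr (2 - lam) / t) * (C * exp (- t) * (1 - exp (- t)) powr (lam - 2))
      = - phi lam t"
    unfolding phi_def Phi_def C_def[symmetric] D_def[symmetric] using D t by (simp add: field_simps)
  ultimately show ?thesis by metis
qed

lemma Phi_nonneg: "lam > 1 \<Longrightarrow> Phi lam t \<ge> 0"
  unfolding Phi_def by simp

lemma tendsto_Phi_at_right_0: "(Phi lam \<longlongrightarrow> 1 / Gamma (lam - 1)) (at_right 0)"
  unfolding Phi_def by real_asymp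

lemma tendsto_Phi_at_top: "(Phi lam \<longlongrightarrow> 0) at_top"
  unfolding Phi_def by real_asymp

lemma phi_nonneg:
  assumes "lam > 1" and "t > 0"
  shows "phi lam t \<ge> 0"
proof -
  have "t powr (-3) * phi lam t \<ge> 0"
    using cmono_nonneg[OF cmono_powr_minus3_phi[OF assms(1)] assms(2)] .
  then show ?thesis
    using assms(2) by (simp add: zero_le_mult_iff)
qed

lemma isCont_phi:
  assumes "t > 0"
  shows "isCont (phi lam) t"
proof -
  have "isCont (Phi lam) t"
    using Phi_has_real_derivative[OF assms] by (rule DERIV_isCont)
  then show ?thesis
    unfolding phi_def[abs_def] using assms by (intro continuous_intros) auto
qed

definition gamma_ratio_primitive :: "real \<Rightarrow> real \<Rightarrow> real \<Rightarrow> real" where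
  "gamma_ratio_primitive lam x t =
     x powr (lam - 1) / Gamma (lam - 1) * lower_inc_beta (lam - 1) (x + 1) (1 - exp (- t))
     - lower_inc_gamma (lam - 1) (x * t) * Phi lam t"

lemma lower_inc_gamma_derivative_times_Phi:
  assumes x: "x > 0" and t: "t > 0"
  shows "exp (- (x * t)) * (x * t) powr (lam - 2) * x * Phi lam t =
    x powr (lam - 1) / Gamma (lam - 1) * ((1 - exp (- t)) powr (lam - 2) * exp (- (x * t)) * exp (- t))"
proof -
  have "exp (- (x * t)) * (x * t) powr (lam - 2) * x * Phi lam t =
      exp (- (x * t)) * ((x * t) powr (lam - 2) * x) * Phi lam t"
    by (simp only: mult.assoc)
  also have "(x * t) powr (lam - 2) * x = x powr (lam - 1) * t powr (lam - 2)"
    using x t powr_add[of x "lam - 2" 1] by (simp add: powr_mult)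
  also have "exp (- (x * t)) * (x powr (lam - 1) * t powr (lam - 2)) * Phi lam t =
      x powr (lam - 1) / Gamma (lam - 1) * ((1 - exp (- t)) powr (lam - 2) * exp (- (x * t)) * exp (- t)) *
      (t powr (lam - 2) * t powr (2 - lam))"
    unfolding Phi_def by (simp add: ac_simps)
  also have "t powr (lam - 2) * t powr (2 - lam) = 1"
    using t powr_add[of t "lam - 2" "2 - lam"] by simp
  finally show ?thesis by simp
qed

lemma gamma_ratio_primitive_has_real_derivative:
  assumes lam: "lam > 1" and x: "x > 0" and t: "t > 0"
  shows "(gamma_ratio_primitive lam x has_real_derivative
           lower_inc_gamma (lam - 1) (x * t) * phi lam t) (at t)"
proof -
  have d_gamma: "((\<lambda>t. lower_inc_gamma (lam - 1) (x * t)) has_real_derivative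
      exp (- (x * t)) * (x * t) powr (lam - 2) * x) (at t)"
    using has_real_derivative_lower_inc_gamma_scaled[of "lam - 1" x t] lam x t by simp
  have "exp (- t) powr x = exp (- (x * t))"
    by (simp add: powr_def)
  then have "(lower_inc_beta (lam - 1) (x + 1) has_real_derivative
      (1 - exp (- t)) powr (lam - 2) * exp (- (x * t))) (at (1 - exp (- t)))"
    using lower_inc_beta_has_real_derivative[of "lam - 1" "x + 1" "1 - exp (- t)"] lam x t by simp
  then have d_beta: "((\<lambda>t. lower_inc_beta (lam - 1) (x + 1) (1 - exp (- t))) has_real_derivative
      (1 - exp (- t)) powr (lam - 2) * exp (- (x * t)) * exp (- t)) (at t)"
    by (rule DERIV_chain2) (auto intro!: derivative_eq_intros)
  have "(gamma_ratio_primitive lam x has_real_derivative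
      x powr (lam - 1) / Gamma (lam - 1) * ((1 - exp (- t)) powr (lam - 2) * exp (- (x * t)) * exp (- t))
      - (exp (- (x * t)) * (x * t) powr (lam - 2) * x * Phi lam t
         + - phi lam t * lower_inc_gamma (lam - 1) (x * t))) (at t)"
    unfolding gamma_ratio_primitive_def[abs_def]
    by (intro DERIV_diff DERIV_cmult DERIV_mult d_gamma d_beta Phi_has_real_derivative t)
  then show ?thesis
    by (simp only: lower_inc_gamma_derivative_times_Phi[OF x t]) (simp add: mult.commute)
qed

lemma tendsto_gamma_ratio_primitive_at_right_0:
  assumes lam: "lam > 1" and x: "x > 0"
  shows "(gamma_ratio_primitive lam x \<longlongrightarrow> 0) (at_right 0)"
proof -
  have "((\<lambda>t. lower_inc_gamma (lam - 1) (x * t)) \<longlongrightarrow> lower_inc_gamma (lam - 1) 0) (at_right 0)"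
  proof (rule continuous_on_tendsto_compose[OF continuous_on_lower_inc_gamma[of "lam - 1" x]])
    have "\<forall>\<^sub>F t in at_right 0. 0 < t \<and> t < (1::real)"
      unfolding eventually_at_right_field by (auto intro!: exI[of _ 1])
    then show "\<forall>\<^sub>F t in at_right 0. x * t \<in> {0..x}"
      by eventually_elim (use x in \<open>auto intro: mult_left_le\<close>)
  qed (use lam x in \<open>auto intro!: tendsto_eq_intros\<close>)
  moreover have "((\<lambda>t. lower_inc_beta (lam - 1) (x + 1) (1 - exp (- t))) \<longlongrightarrow>
      lower_inc_beta (lam - 1) (x + 1) 0) (at_right 0)"
  proof (rule continuous_on_tendsto_compose[OF continuous_on_lower_inc_beta])
    show "((\<lambda>t. 1 - exp (- t)) \<longlongrightarrow> 0) (at_right (0::real))" by real_asymp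
    show "\<forall>\<^sub>F t in at_right 0. 1 - exp (- t) \<in> {0..1::real}"
      unfolding eventually_at_right_field by (auto intro!: exI[of _ 1])
  qed (use lam x in auto)
  ultimately have "(gamma_ratio_primitive lam x \<longlongrightarrow>
      x powr (lam - 1) / Gamma (lam - 1) * 0 - 0 * (1 / Gamma (lam - 1))) (at_right 0)"
    unfolding gamma_ratio_primitive_def[abs_def] lower_inc_gamma_0 lower_inc_beta_0
    by (intro tendsto_intros tendsto_Phi_at_right_0)
  then show ?thesis by simp
qed

lemma tendsto_gamma_ratio_primitive_at_top:
  assumes lam: "lam > 1" and x: "x > 0"
  shows "(gamma_ratio_primitive lam x \<longlongrightarrow>
           x powr (lam - 1) / Gamma (lam - 1) * Beta (lam - 1) (x + 1)) at_top"
proof -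
  have "((\<lambda>t. lower_inc_beta (lam - 1) (x + 1) (1 - exp (- t))) \<longlongrightarrow>
      lower_inc_beta (lam - 1) (x + 1) 1) at_top"
  proof (rule continuous_on_tendsto_compose[OF continuous_on_lower_inc_beta])
    show "((\<lambda>t::real. 1 - exp (- t)) \<longlongrightarrow> 1) at_top" by real_asymp
    show "\<forall>\<^sub>F t in at_top. 1 - exp (- t) \<in> {0..1::real}"
      using eventually_gt_at_top[of 0] by eventually_elim auto
  qed (use lam x in auto)
  then have "((\<lambda>t. lower_inc_beta (lam - 1) (x + 1) (1 - exp (- t))) \<longlongrightarrow>
      Beta (lam - 1) (x + 1)) at_top"
    using lower_inc_beta_1[of "lam - 1" "x + 1"] lam x by simp
  moreover have "((\<lambda>t. lower_inc_gamma (lam - 1) (x * t) * Phi lam t) \<longlongrightarrow> 0) at_top"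
  proof (rule tendsto_sandwich[where f="\<lambda>_. 0" and h="\<lambda>t. Gamma (lam - 1) * Phi lam t"])
    show "\<forall>\<^sub>F t in at_top. 0 \<le> lower_inc_gamma (lam - 1) (x * t) * Phi lam t"
      using lam
      by (intro always_eventually allI mult_nonneg_nonneg lower_inc_gamma_nonneg Phi_nonneg) auto
    show "\<forall>\<^sub>F t in at_top.
        lower_inc_gamma (lam - 1) (x * t) * Phi lam t \<le> Gamma (lam - 1) * Phi lam t"
      using lam by (intro always_eventually allI mult_right_mono lower_inc_gamma_le_Gamma Phi_nonneg) auto
    show "((\<lambda>t. Gamma (lam - 1) * Phi lam t) \<longlongrightarrow> 0) at_top"
      using tendsto_mult_right_zero[OF tendsto_Phi_at_top] .
  qed simp
  ultimately have "(gamma_ratio_primitive lam x \<longlongrightarrow>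
      x powr (lam - 1) / Gamma (lam - 1) * Beta (lam - 1) (x + 1) - 0) at_top"
    unfolding gamma_ratio_primitive_def[abs_def] by (intro tendsto_intros)
  then show ?thesis by simp
qed

lemma has_integral_lower_inc_gamma_phi:
  assumes lam: "lam > 1" and x: "x > 0"
  shows "((\<lambda>t. lower_inc_gamma (lam - 1) (x * t) * phi lam t) has_integral
           x powr lam * Gamma x / Gamma (lam + x)) {0<..}"
proof -
  have nonneg: "lower_inc_gamma (lam - 1) (x * t) * phi lam t \<ge> 0" if "t > 0" for t
    using lam that by (intro mult_nonneg_nonneg lower_inc_gamma_nonneg phi_nonneg) auto
  have cont: "isCont (\<lambda>t. lower_inc_gamma (lam - 1) (x * t) * phi lam t) t" if t: "t > 0" for t
  proof -
    have "isCont (\<lambda>t. lower_inc_gamma (lam - 1) (x * t)) t"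
      by (rule DERIV_isCont[OF has_real_derivative_lower_inc_gamma_scaled]) (use lam x t in auto)
    then show ?thesis by (intro continuous_intros isCont_phi t)
  qed
  have "((\<lambda>t. lower_inc_gamma (lam - 1) (x * t) * phi lam t) has_integral
      x powr (lam - 1) / Gamma (lam - 1) * Beta (lam - 1) (x + 1) - 0) {0<..}"
    by (rule has_integral_greaterThan_FTC_nonneg[OF gamma_ratio_primitive_has_real_derivative[OF lam x]
          cont nonneg tendsto_gamma_ratio_primitive_at_right_0[OF lam x]
          tendsto_gamma_ratio_primitive_at_top[OF lam x]])
  then show ?thesis
    using Beta_plus1_div_Gamma[of "lam - 1" x] lam x by simp
qed

theorem proposition3p4:
  fixes lam :: real
  assumes "lam > 1"
  shows "(\<lambda>x. x powr lam * Gamma x / Gamma (lam + x)) \<in> T_class (lam - 1) (-3)"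
  unfolding T_class_def mem_Collect_eq
proof (intro exI conjI)
  show "completely_monotonic_order (-3) (phi lam)"
    unfolding completely_monotonic_order_def
    using cmono_imp_completely_monotonic[OF cmono_powr_minus3_phi[OF assms]] .
  show "\<forall>x>0. ((\<lambda>t. lower_inc_gamma (lam - 1) (x * t) * phi lam t) has_integral
      x powr lam * Gamma x / Gamma (lam + x) - 0 * x powr (lam - 1) - 0) {0<..}"
    using has_integral_lower_inc_gamma_phi[OF assms] by (simp only: mult_zero_left diff_zero) blast
qed simp_all

end
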